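(* Every two-bridge knot $K\subset S^3$ satisfies the Brumfiel–Hilden condition.
   Context: For a group $\pi$, the Brumfiel–Hilden algebra is $H[\pi]:=\mathbb{C}[\pi]/I$, where $I$ is the two-sided ideal of the group algebra generated by all elements $g(h+h^{-1})-(h+h^{-1})g$ with $g,h\in\pi$. $H^+[\pi]\subset H[\pi]$ is the subalgebra generated by the images of all $g+g^{-1}$, $g\in\pi$. For an element $X\in H[\pi]$ which is the image of a group element, $H^+[\pi][X^{\pm1}]$ denotes the subalgebra of $H[\pi]$ generated by $H^+[\pi]$, $X$ and $X^{-1}$. A knot $K\subset S^3$ with group $\pi=\pi_1(S^3\setminus K)$ and standard (commuting) meridian $m$ and longitude $l$ is said to satisfy the Brumfiel–Hilden condition if the image $Y$ of $l$ in $H[\pi]$ lies in $H^+[\pi][X^{\pm1}]$, where $X$ is the image of $m$. *)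

theory Defs
  imports Complex_Main "HOL-Library.Poly_Mapping"
begin

text \<open>A letter is a pair (generator, inverted); generator False = a, True = b.\<close>
type_synonym letter = "bool \<times> bool"

definition inv_letter :: "letter \<Rightarrow> letter" where
  "inv_letter x = (fst x, \<not> snd x)"

definition inv_word :: "letter list \<Rightarrow> letter list" where
  "inv_word w = rev (map inv_letter w)"

definition gen_a :: letter where "gen_a = (False, False)"
definition gen_b :: letter where "gen_b = (True, False)"

text \<open>Free monoid on the four letters a, a^-1, b, b^-1 (written additively,
  non-commutatively), used as the index monoid of the free associative algebra.\<close>
datatype fword = FW "letter list"

instantiation fword :: monoid_add
begin
fun plus_fword :: "fword \<Rightarrow> fword \<Rightarrow> fword" where
  "plus_fword (FW x) (FW y) = FW (x @ y)"
definition zero_fword :: fword where "zero_fword = FW []"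
instance proof
  fix a b c :: fword
  show "a + b + c = a + (b + c)" by (cases a; cases b; cases c) simp_all
  show "0 + a = a" by (cases a) (simp add: zero_fword_def)
  show "a + 0 = a" by (cases a) (simp add: zero_fword_def)
qed
end

text \<open>Free associative unital C-algebra on a, a^-1, b, b^-1.\<close>
type_synonym falg = "fword \<Rightarrow>\<^sub>0 complex"

definition mono :: "letter list \<Rightarrow> falg" where
  "mono w = Poly_Mapping.single (FW w) 1"

inductive_set two_sided_ideal :: "falg set \<Rightarrow> falg set" for S where
  zero: "0 \<in> two_sided_ideal S"
| gen: "s \<in> S \<Longrightarrow> u * s * v \<in> two_sided_ideal S"
| add: "x \<in> two_sided_ideal S \<Longrightarrow> y \<in> two_sided_ideal S \<Longrightarrow> x + y \<in> two_sided_ideal S"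

inductive_set subalg :: "falg set \<Rightarrow> falg set" for G where
  scalar: "Poly_Mapping.single 0 c \<in> subalg G"
| gen: "g \<in> G \<Longrightarrow> g \<in> subalg G"
| add: "x \<in> subalg G \<Longrightarrow> y \<in> subalg G \<Longrightarrow> x + y \<in> subalg G"
| mult: "x \<in> subalg G \<Longrightarrow> y \<in> subalg G \<Longrightarrow> x * y \<in> subalg G"

text \<open>For p odd, q odd, -p < q < p, gcd(p,q) = 1, the two-bridge knot b(p,q) has group
  <a,b | w a = b w>, w = a^e1 b^e2 a^e3 ... b^e(p-1), e_i = (-1)^floor(i q / p),
  meridian a and (standard, commuting) longitude  w* w a^(-2 sigma), where w* is w
  written backwards and sigma = e_1 + ... + e_(p-1).\<close>

definition tb_eps :: "int \<Rightarrow> int \<Rightarrow> nat \<Rightarrow> int" where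
  "tb_eps p q i = (if even ((int i * q) div p) then 1 else -1)"

definition letter_pow :: "bool \<Rightarrow> int \<Rightarrow> letter list" where
  "letter_pow x k = (if k \<ge> 0 then replicate (nat k) (x, False) else replicate (nat (- k)) (x, True))"

definition tb_word :: "int \<Rightarrow> int \<Rightarrow> letter list" where
  "tb_word p q = concat (map (\<lambda>i. letter_pow (even i) (tb_eps p q i)) [1..<nat p])"

definition tb_sigma :: "int \<Rightarrow> int \<Rightarrow> int" where
  "tb_sigma p q = (\<Sum>i\<in>{1..<nat p}. tb_eps p q i)"

definition tb_longitude :: "int \<Rightarrow> int \<Rightarrow> letter list" where
  "tb_longitude p q = rev (tb_word p q) @ tb_word p q @ letter_pow False (- 2 * tb_sigma p q)"

text \<open>Relations presenting H[pi] as a quotient of the free algebra: inverse relations,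
  the knot relation, and the Brumfiel-Hilden relations g(h+h^-1) = (h+h^-1)g for
  all group elements g, h (represented by arbitrary words).\<close>
definition BH_relations :: "int \<Rightarrow> int \<Rightarrow> falg set" where
  "BH_relations p q =
     {mono [x, inv_letter x] - 1 | x. True}
   \<union> {mono (tb_word p q @ [gen_a]) - mono (gen_b # tb_word p q)}
   \<union> {mono g * (mono h + mono (inv_word h)) - (mono h + mono (inv_word h)) * mono g | g h. True}"

text \<open>Generators of H^+[pi][X^{+-1}]: all g + g^-1, and X, X^-1.\<close>
definition Hplus_X_gens :: "falg set" where
  "Hplus_X_gens = {mono g + mono (inv_word g) | g. True} \<union> {mono [gen_a], mono [inv_letter gen_a]}"

definition two_bridge_BH_condition :: "int \<Rightarrow> int \<Rightarrow> bool" where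
  "two_bridge_BH_condition p q \<longleftrightarrow>
     (\<exists>z \<in> subalg Hplus_X_gens. mono (tb_longitude p q) - z \<in> two_sided_ideal (BH_relations p q))"

end

theory Submission
  imports Defs
begin

text \<open>
  In \<open>H[\<pi>]\<close> every \<open>g + g\<inverse>\<close> is central. In the Riley presentation \<open>\<langle>a, b | w a = b w\<rangle>\<close>
  the generators are conjugate, so \<open>t = a + a\<inverse> = b + b\<inverse>\<close>; with the central element
  \<open>u = ab + (ab)\<inverse>\<close> this gives \<open>a\<^sup>2 = ta - 1\<close>, \<open>b\<^sup>2 = tb - 1\<close> and \<open>ba = u - t\<^sup>2 + ta + tb - ab\<close>.
  Hence \<open>H[\<pi>]\<close> is spanned by \<open>1, a, b, ab\<close> over a commutative ring \<open>C\<close> of central elements of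
  \<open>H\<^sup>+[\<pi>][X\<^sup>\<plusminus>\<^sup>1]\<close>, and in these coordinates the reversal anti-automorphism and the
  automorphism exchanging \<open>a\<close> and \<open>b\<close> are explicit. The exponents of \<open>w\<close> satisfy
  \<open>e(p - i) = e(i)\<close>, so the reverse \<open>w\<^sup>*\<close> of \<open>w\<close> is \<open>w\<close> with \<open>a\<close> and \<open>b\<close> exchanged, and the two
  maps agree on \<open>w\<close>. A direct computation then shows that \<open>w\<^sup>* w + \<lambda> (w a - b w)\<close> has vanishing
  \<open>b\<close>- and \<open>ab\<close>-coordinates for a suitable \<open>\<lambda> \<in> C\<close>. As \<open>w a = b w\<close>, this puts \<open>w\<^sup>* w\<close>, and
  hence the longitude \<open>w\<^sup>* w a\<^sup>-\<^sup>2\<^sup>\<sigma>\<close>, into \<open>C + C X \<subseteq> H\<^sup>+[\<pi>][X\<^sup>\<plusminus>\<^sup>1]\<close>.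
\<close>

section \<open>Coordinates with respect to \<open>1, a, b, ab\<close>\<close>

text \<open>\<open>AB c\<^sub>0 c\<^sub>1 c\<^sub>2 c\<^sub>3\<close> stands for \<open>c\<^sub>0 + c\<^sub>1 a + c\<^sub>2 b + c\<^sub>3 ab\<close>.\<close>

datatype 'r abvec = AB (coeff_1: 'r) (coeff_a: 'r) (coeff_b: 'r) (coeff_ab: 'r)

instantiation abvec :: (ab_group_add) ab_group_add
begin

fun plus_abvec :: "'a abvec \<Rightarrow> 'a abvec \<Rightarrow> 'a abvec" where
  "plus_abvec (AB x0 x1 x2 x3) (AB y0 y1 y2 y3) = AB (x0 + y0) (x1 + y1) (x2 + y2) (x3 + y3)"

fun minus_abvec :: "'a abvec \<Rightarrow> 'a abvec \<Rightarrow> 'a abvec" where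
  "minus_abvec (AB x0 x1 x2 x3) (AB y0 y1 y2 y3) = AB (x0 - y0) (x1 - y1) (x2 - y2) (x3 - y3)"

fun uminus_abvec :: "'a abvec \<Rightarrow> 'a abvec" where
  "uminus_abvec (AB x0 x1 x2 x3) = AB (- x0) (- x1) (- x2) (- x3)"

definition zero_abvec :: "'a abvec" where
  "zero_abvec = AB 0 0 0 0"

instance
proof
  fix x y z :: "'a abvec"
  show "x + y + z = x + (y + z)" by (cases x; cases y; cases z) (simp add: add.assoc)
  show "x + y = y + x" by (cases x; cases y) (simp add: add.commute)
  show "0 + x = x" by (cases x) (simp add: zero_abvec_def)
  show "- x + x = 0" by (cases x) (simp add: zero_abvec_def)
  show "x - y = x + - y" by (cases x; cases y) simp
qed

end

fun ab_scale :: "'r::times \<Rightarrow> 'r abvec \<Rightarrow> 'r abvec" where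
  "ab_scale c (AB x0 x1 x2 x3) = AB (c * x0) (c * x1) (c * x2) (c * x3)"

definition ab_one :: "'r::{zero,one} abvec" where "ab_one = AB 1 0 0 0"
definition ab_a :: "'r::{zero,one} abvec" where "ab_a = AB 0 1 0 0"
definition ab_b :: "'r::{zero,one} abvec" where "ab_b = AB 0 0 1 0"

definition swap_letter :: "letter \<Rightarrow> letter" where
  "swap_letter l = (\<not> fst l, snd l)"

lemma inv_letter_inv_letter [simp]: "inv_letter (inv_letter x) = x"
  by (simp add: inv_letter_def)

context
  fixes T U :: "'r::comm_ring_1"
begin

text \<open>Multiplication, rev and swap are determined by \<open>a\<^sup>2 = T a - 1\<close>, \<open>b\<^sup>2 = T b - 1\<close> and
  \<open>b a = U - T\<^sup>2 + T a + T b - a b\<close>; \<open>ab_rev\<close> fixes \<open>a\<close> and \<open>b\<close> and reverses products,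
  \<open>ab_swap\<close> exchanges \<open>a\<close> and \<open>b\<close>, and both send \<open>ab\<close> to \<open>ba\<close>.\<close>

fun ab_mult :: "'r abvec \<Rightarrow> 'r abvec \<Rightarrow> 'r abvec" where
  "ab_mult (AB x0 x1 x2 x3) (AB y0 y1 y2 y3) =
    AB (x0*y0 - x1*y1 + U*x2*y1 - T*T*x2*y1 - x2*y2 - T*x2*y3 - T*x3*y1 - x3*y3)
       (x0*y1 + x1*y0 + T*x1*y1 + T*x2*y1 + x2*y3 + U*x3*y1 - x3*y2)
       (x0*y2 - x1*y3 + x2*y0 + T*x2*y1 + T*x2*y2 + U*x2*y3 + x3*y1)
       (x0*y3 + x1*y2 + T*x1*y3 - x2*y1 + x3*y0 + T*x3*y2 + U*x3*y3)"

fun ab_rev :: "'r abvec \<Rightarrow> 'r abvec" where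
  "ab_rev (AB x0 x1 x2 x3) = AB (x0 + x3*(U - T*T)) (x1 + x3*T) (x2 + x3*T) (- x3)"

fun ab_swap :: "'r abvec \<Rightarrow> 'r abvec" where
  "ab_swap (AB x0 x1 x2 x3) = AB (x0 + x3*(U - T*T)) (x2 + x3*T) (x1 + x3*T) (- x3)"

text \<open>The inverse letters are \<open>a\<inverse> = T - a\<close> and \<open>b\<inverse> = T - b\<close>.\<close>

fun ab_letter :: "letter \<Rightarrow> 'r abvec" where
  "ab_letter (False, False) = ab_a"
| "ab_letter (False, True) = AB T (-1) 0 0"
| "ab_letter (True, False) = ab_b"
| "ab_letter (True, True) = AB T 0 (-1) 0"

fun ab_word :: "letter list \<Rightarrow> 'r abvec" where
  "ab_word [] = ab_one"
| "ab_word (l # x) = ab_mult (ab_letter l) (ab_word x)"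

lemma ab_mult_assoc: "ab_mult (ab_mult x y) z = ab_mult x (ab_mult y z)"
  by (cases x; cases y; cases z) (simp add: algebra_simps)

lemma ab_mult_one_left [simp]: "ab_mult ab_one x = x"
  by (cases x) (simp add: ab_one_def)

lemma ab_mult_one_right [simp]: "ab_mult x ab_one = x"
  by (cases x) (simp add: ab_one_def)

lemma ab_rev_mult: "ab_rev (ab_mult x y) = ab_mult (ab_rev y) (ab_rev x)"
  by (cases x; cases y) (simp add: algebra_simps)

lemma ab_swap_mult: "ab_swap (ab_mult x y) = ab_mult (ab_swap x) (ab_swap y)"
  by (cases x; cases y) (simp add: algebra_simps)

lemma ab_rev_one [simp]: "ab_rev ab_one = ab_one"
  by (simp add: ab_one_def)

lemma ab_swap_one [simp]: "ab_swap ab_one = ab_one"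
  by (simp add: ab_one_def)

lemma ab_rev_letter [simp]: "ab_rev (ab_letter l) = ab_letter l"
  by (cases l rule: ab_letter.cases) (simp_all add: ab_a_def ab_b_def)

lemma ab_swap_letter [simp]: "ab_swap (ab_letter l) = ab_letter (swap_letter l)"
  by (cases l rule: ab_letter.cases) (simp_all add: ab_a_def ab_b_def swap_letter_def)

lemma ab_mult_letter_a_inv: "ab_mult (ab_letter (False, True)) v = ab_scale T v - ab_mult ab_a v"
  by (cases v) (simp add: ab_a_def algebra_simps)

lemma ab_mult_letter_b_inv: "ab_mult (ab_letter (True, True)) v = ab_scale T v - ab_mult ab_b v"
  by (cases v) (simp add: ab_b_def algebra_simps)

lemma ab_word_append: "ab_word (x @ y) = ab_mult (ab_word x) (ab_word y)"
  by (induction x) (simp_all add: ab_mult_assoc)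

lemma ab_word_rev: "ab_word (rev x) = ab_rev (ab_word x)"
  by (induction x) (simp_all add: ab_word_append ab_rev_mult)

lemma ab_word_map_swap: "ab_word (map swap_letter x) = ab_swap (ab_word x)"
  by (induction x) (simp_all add: ab_swap_mult)

lemma ab_rev_mult_self_in_span_one_a:
  assumes "ab_rev v = ab_swap v"
  shows "\<exists>c \<alpha> \<beta>.
    ab_mult (ab_rev v) v + ab_scale c (ab_mult v ab_a - ab_mult ab_b v) = AB \<alpha> \<beta> 0 0"
proof (cases v)
  case (AB x0 x1 x2 x3)
  have "coeff_a (ab_rev v) = coeff_a (ab_swap v)"
    using assms by (rule arg_cong)
  then have "x2 = x1"
    by (simp add: AB)
  \<comment> \<open>the multiplier \<open>2 x\<^sub>1 + T x\<^sub>3\<close> is what cancels the \<open>b\<close>- and \<open>ab\<close>-coordinates\<close>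
  define r where
    "r = ab_mult (ab_rev v) v + ab_scale (2 * x1 + T * x3) (ab_mult v ab_a - ab_mult ab_b v)"
  have "coeff_b r = 0"
    unfolding r_def AB \<open>x2 = x1\<close> ab_a_def ab_b_def by (simp add: algebra_simps)
  moreover have "coeff_ab r = 0"
    unfolding r_def AB \<open>x2 = x1\<close> ab_a_def ab_b_def by (simp add: algebra_simps)
  ultimately have "r = AB (coeff_1 r) (coeff_a r) 0 0"
    by (metis abvec.collapse)
  then show ?thesis
    unfolding r_def by blast
qed

end

section \<open>The free algebra\<close>

text \<open>Keeps \<open>transfer\<close> on the quotient below from descending into the representation of \<^typ>\<open>falg\<close>.\<close>
lifting_forget poly_mapping.lifting

abbreviation word_trace :: "letter list \<Rightarrow> falg" where
  "word_trace h \<equiv> mono h + mono (inv_word h)"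

lemma mono_append: "mono (x @ y) = mono x * mono y"
  by (simp add: mono_def mult_single)

lemma mono_Nil [simp]: "mono [] = 1"
  by (simp add: mono_def zero_fword_def[symmetric])

lemma mono_Cons: "mono (l # x) = mono [l] * mono x"
  using mono_append[of "[l]" x] by simp

lemma poly_mapping_sum_single:
  "x = (\<Sum>k\<in>Poly_Mapping.keys x. Poly_Mapping.single k (Poly_Mapping.lookup x k))"
  by (rule poly_mapping_eqI) (simp add: lookup_sum lookup_single when_def in_keys_iff)

lemma poly_mapping_single_induct [case_names zero single add]:
  fixes x :: "'a \<Rightarrow>\<^sub>0 'b::comm_monoid_add"
  assumes "P 0" and "\<And>k c. P (Poly_Mapping.single k c)"
    and "\<And>x y. P x \<Longrightarrow> P y \<Longrightarrow> P (x + y)"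
  shows "P x"
proof -
  have "P (\<Sum>k\<in>K. Poly_Mapping.single k (Poly_Mapping.lookup x k))" if "finite K" for K
    using that by (induction K rule: finite_induct) (simp_all add: assms)
  then show ?thesis
    by (metis poly_mapping_sum_single finite_keys)
qed

lemma single_zero_mult_commute:
  fixes x :: "'a::monoid_add \<Rightarrow>\<^sub>0 'b::comm_semiring_0"
  shows "Poly_Mapping.single 0 c * x = x * Poly_Mapping.single 0 c"
  by (induction x rule: poly_mapping_single_induct)
    (simp_all add: mult_single mult.commute distrib_left distrib_right)

definition augmentation :: "('a \<Rightarrow>\<^sub>0 'b::comm_monoid_add) \<Rightarrow> 'b" where
  "augmentation x = (\<Sum>k\<in>Poly_Mapping.keys x. Poly_Mapping.lookup x k)"

lemma augmentation_zero [simp]: "augmentation 0 = 0"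
  by (simp add: augmentation_def)

lemma augmentation_add: "augmentation (x + y) = augmentation x + augmentation y"
  unfolding augmentation_def by (rule setsum_keys_plus_distrib) simp_all

lemma augmentation_single [simp]: "augmentation (Poly_Mapping.single k c) = c"
  by (cases "c = 0") (simp_all add: augmentation_def)

lemma augmentation_diff:
  fixes x :: "'a \<Rightarrow>\<^sub>0 'b::ab_group_add"
  shows "augmentation (x - y) = augmentation x - augmentation y"
  using augmentation_add[of "x - y" y] by (simp add: algebra_simps)

lemma augmentation_mult:
  fixes x :: "'a::monoid_add \<Rightarrow>\<^sub>0 'b::semiring_0"
  shows "augmentation (x * y) = augmentation x * augmentation y"
proof (induction x rule: poly_mapping_single_induct)
  case (single k c)
  show ?case
    by (induction y rule: poly_mapping_single_induct)
      (simp_all add: mult_single augmentation_add distrib_left)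
qed (simp_all add: augmentation_add distrib_right)

lemma augmentation_mono [simp]: "augmentation (mono w) = 1"
  by (simp add: mono_def)

lemma augmentation_one [simp]: "augmentation (1 :: falg) = 1"
  using augmentation_mono[of "[]"] by simp

lemma two_sided_ideal_mult_left: "x \<in> two_sided_ideal S \<Longrightarrow> w * x \<in> two_sided_ideal S"
proof (induction x rule: two_sided_ideal.induct)
  case (gen s u v)
  then show ?case
    using two_sided_ideal.gen[of s S "w * u" v] by (simp add: mult.assoc)
qed (simp_all add: two_sided_ideal.zero two_sided_ideal.add distrib_left)

lemma two_sided_ideal_mult_right: "x \<in> two_sided_ideal S \<Longrightarrow> x * w \<in> two_sided_ideal S"
proof (induction x rule: two_sided_ideal.induct)
  case (gen s u v)
  then show ?case
    using two_sided_ideal.gen[of s S u "v * w"] by (simp add: mult.assoc)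
qed (simp_all add: two_sided_ideal.zero two_sided_ideal.add distrib_right)

lemma two_sided_ideal_uminus: "x \<in> two_sided_ideal S \<Longrightarrow> - x \<in> two_sided_ideal S"
  using two_sided_ideal_mult_left[of x S "-1"] by simp

lemma two_sided_ideal_diff:
  "x \<in> two_sided_ideal S \<Longrightarrow> y \<in> two_sided_ideal S \<Longrightarrow> x - y \<in> two_sided_ideal S"
  by (metis diff_conv_add_uminus two_sided_ideal.add two_sided_ideal_uminus)

lemma two_sided_ideal_generator: "s \<in> S \<Longrightarrow> s \<in> two_sided_ideal S"
  using two_sided_ideal.gen[of s S 1 1] by simp

lemma two_sided_ideal_subset:
  assumes "S \<subseteq> two_sided_ideal S'"
  shows "two_sided_ideal S \<subseteq> two_sided_ideal S'"
proof
  show "x \<in> two_sided_ideal S'" if "x \<in> two_sided_ideal S" for x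
    using that
  proof (induction x rule: two_sided_ideal.induct)
    case (gen s u v)
    then show ?case
      using assms two_sided_ideal_mult_left two_sided_ideal_mult_right by blast
  qed (simp_all add: two_sided_ideal.zero two_sided_ideal.add)
qed

lemma augmentation_two_sided_ideal:
  assumes "\<And>s. s \<in> S \<Longrightarrow> augmentation s = 0"
  shows "x \<in> two_sided_ideal S \<Longrightarrow> augmentation x = 0"
  by (induction x rule: two_sided_ideal.induct)
    (simp_all add: assms augmentation_add augmentation_mult)

lemma subalg_uminus: "x \<in> subalg G \<Longrightarrow> - x \<in> subalg G"
  using subalg.mult[OF subalg.scalar[of "-1"], of x] by (simp add: single_uminus)

lemma subalg_mono_replicate: "mono [l] \<in> subalg G \<Longrightarrow> mono (replicate n l) \<in> subalg G"
proof (induction n)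
  case 0
  then show ?case
    using subalg.scalar[of 1 G] by simp
next
  case (Suc n)
  then show ?case
    using mono_Cons[of l "replicate n l"] by (simp add: subalg.mult)
qed

lemma mono_mult_inv_word:
  assumes "\<And>x. mono [x, inv_letter x] - 1 \<in> S"
  shows "mono w * mono (inv_word w) - 1 \<in> two_sided_ideal S"
proof (induction w)
  case Nil
  then show ?case
    by (simp add: inv_word_def two_sided_ideal.zero)
next
  case (Cons l w)
  have "mono (l # w) * mono (inv_word (l # w)) - 1
      = mono [l] * (mono w * mono (inv_word w) - 1) * mono [inv_letter l]
        + (mono [l, inv_letter l] - 1)"
    by (simp add: inv_word_def mono_append mono_Cons[of l w] mono_Cons[of l "[inv_letter l]"]
        algebra_simps)
  moreover have
    "mono [l] * (mono w * mono (inv_word w) - 1) * mono [inv_letter l] \<in> two_sided_ideal S"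
    using Cons.IH by (intro two_sided_ideal_mult_right two_sided_ideal_mult_left)
  ultimately show ?case
    using assms two_sided_ideal.add two_sided_ideal_generator by metis
qed

lemma conjugate_letters_trace_diff:
  assumes inv: "\<And>l. mono [l, inv_letter l] - 1 \<in> S"
    and central: "mono w * word_trace [x] - word_trace [x] * mono w \<in> S"
    and conj: "mono w * mono [x] - mono [y] * mono w \<in> S"
  shows "word_trace [x] - word_trace [y] \<in> two_sided_ideal S"
proof -
  let ?I = "two_sided_ideal S" and ?W = "mono w" and ?X = "mono [x]" and ?Y = "mono [y]"
    and ?X' = "mono [inv_letter x]" and ?Y' = "mono [inv_letter y]"
  have X_inv: "?X * ?X' - 1 \<in> ?I" and Y_inv: "?Y' * ?Y - 1 \<in> ?I"
    using inv[of x] inv[of "inv_letter y"]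
    by (simp_all add: two_sided_ideal_generator mono_Cons[of _ "[_]"])
  have "?Y' * (?W * ?X - ?Y * ?W) * ?X' \<in> ?I"
    using conj by (rule two_sided_ideal.gen)
  moreover have "?Y' * ?W * (?X * ?X' - 1) \<in> ?I"
    using X_inv by (rule two_sided_ideal_mult_left)
  moreover have "(?Y' * ?Y - 1) * ?W * ?X' \<in> ?I"
    using Y_inv by (intro two_sided_ideal_mult_right)
  ultimately have
    "?Y' * (?W * ?X - ?Y * ?W) * ?X' - ?Y' * ?W * (?X * ?X' - 1) + (?Y' * ?Y - 1) * ?W * ?X' \<in> ?I"
    by (intro two_sided_ideal.add two_sided_ideal_diff)
  then have conj_inv: "?Y' * ?W - ?W * ?X' \<in> ?I"
    by (simp add: algebra_simps)
  have "- (?W * word_trace [x] - word_trace [x] * ?W) + (?W * ?X - ?Y * ?W) - (?Y' * ?W - ?W * ?X')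
      \<in> ?I"
    using two_sided_ideal_generator[OF central] two_sided_ideal_generator[OF conj] conj_inv
    by (intro two_sided_ideal_diff[OF two_sided_ideal.add[OF two_sided_ideal_uminus]])
  then have trace_diff_W: "(word_trace [x] - word_trace [y]) * ?W \<in> ?I"
    by (simp add: inv_word_def algebra_simps)
  have "(word_trace [x] - word_trace [y]) * ?W * mono (inv_word w)
      - (word_trace [x] - word_trace [y]) * (?W * mono (inv_word w) - 1) \<in> ?I"
    using two_sided_ideal_mult_right[OF trace_diff_W]
      two_sided_ideal_mult_left[OF mono_mult_inv_word[OF inv]]
    by (rule two_sided_ideal_diff)
  then show ?thesis
    by (simp add: algebra_simps)
qed

section \<open>A quotient common to all two-bridge knots\<close>

text \<open>A type cannot depend on \<open>p\<close> and \<open>q\<close>, so we compute in the quotient by the relations that hold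
  for every two-bridge knot: inverses, the Brumfiel-Hilden relations, and \<open>a + a\<inverse> = b + b\<inverse>\<close>
  (which holds because \<open>a\<close> and \<open>b\<close> are conjugate, see \<open>univ_ideal_subset_BH_ideal\<close>).\<close>

definition univ_relations :: "falg set" where
  "univ_relations =
     {mono [x, inv_letter x] - 1 | x. True}
   \<union> {mono g * word_trace h - word_trace h * mono g | g h. True}
   \<union> {word_trace [gen_a] - word_trace [gen_b]}"

definition univ_cong :: "falg \<Rightarrow> falg \<Rightarrow> bool" where
  "univ_cong x y \<longleftrightarrow> x - y \<in> two_sided_ideal univ_relations"

lemma univ_cong_refl [simp]: "univ_cong x x"
  by (simp add: univ_cong_def two_sided_ideal.zero)

lemma equivp_univ_cong: "equivp univ_cong"
proof (rule equivpI)
  show "reflp univ_cong"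
    by (simp add: reflpI)
  show "symp univ_cong"
  proof (rule sympI, unfold univ_cong_def)
    fix x y :: falg
    assume "x - y \<in> two_sided_ideal univ_relations"
    then have "- (x - y) \<in> two_sided_ideal univ_relations"
      by (rule two_sided_ideal_uminus)
    then show "y - x \<in> two_sided_ideal univ_relations"
      by simp
  qed
  show "transp univ_cong"
  proof (rule transpI, unfold univ_cong_def)
    fix x y z :: falg
    assume "x - y \<in> two_sided_ideal univ_relations" "y - z \<in> two_sided_ideal univ_relations"
    then have "(x - y) + (y - z) \<in> two_sided_ideal univ_relations"
      by (rule two_sided_ideal.add)
    then show "x - z \<in> two_sided_ideal univ_relations"
      by simp
  qed
qed

quotient_type univ_bh = falg / univ_cong
  by (rule equivp_univ_cong)

instantiation univ_bh :: ring_1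
begin

lift_definition zero_univ_bh :: univ_bh is 0 .

lift_definition one_univ_bh :: univ_bh is 1 .

lift_definition plus_univ_bh :: "univ_bh \<Rightarrow> univ_bh \<Rightarrow> univ_bh" is "(+)"
proof (unfold univ_cong_def)
  fix x x' y y' :: falg
  assume "x - x' \<in> two_sided_ideal univ_relations" "y - y' \<in> two_sided_ideal univ_relations"
  then have "(x - x') + (y - y') \<in> two_sided_ideal univ_relations"
    by (rule two_sided_ideal.add)
  then show "x + y - (x' + y') \<in> two_sided_ideal univ_relations"
    by (simp add: algebra_simps)
qed

lift_definition uminus_univ_bh :: "univ_bh \<Rightarrow> univ_bh" is uminus
proof (unfold univ_cong_def)
  fix x x' :: falg
  assume "x - x' \<in> two_sided_ideal univ_relations"
  then have "- (x - x') \<in> two_sided_ideal univ_relations"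
    by (rule two_sided_ideal_uminus)
  then show "- x - - x' \<in> two_sided_ideal univ_relations"
    by (simp add: algebra_simps)
qed

lift_definition minus_univ_bh :: "univ_bh \<Rightarrow> univ_bh \<Rightarrow> univ_bh" is "(-)"
proof (unfold univ_cong_def)
  fix x x' y y' :: falg
  assume "x - x' \<in> two_sided_ideal univ_relations" "y - y' \<in> two_sided_ideal univ_relations"
  then have "(x - x') - (y - y') \<in> two_sided_ideal univ_relations"
    by (rule two_sided_ideal_diff)
  then show "x - y - (x' - y') \<in> two_sided_ideal univ_relations"
    by (simp add: algebra_simps)
qed

lift_definition times_univ_bh :: "univ_bh \<Rightarrow> univ_bh \<Rightarrow> univ_bh" is "(*)"
proof (unfold univ_cong_def)
  fix x x' y y' :: falg
  assume "x - x' \<in> two_sided_ideal univ_relations" "y - y' \<in> two_sided_ideal univ_relations"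
  then have "(x - x') * y + x' * (y - y') \<in> two_sided_ideal univ_relations"
    by (intro two_sided_ideal.add two_sided_ideal_mult_left two_sided_ideal_mult_right)
  then show "x * y - x' * y' \<in> two_sided_ideal univ_relations"
    by (simp add: algebra_simps)
qed

lemma not_univ_cong_zero_one: "\<not> univ_cong 0 1"
proof
  have "augmentation s = 0" if "s \<in> univ_relations" for s
    using that
    by (auto simp: univ_relations_def augmentation_diff augmentation_add augmentation_mult)
  moreover assume "univ_cong 0 1"
  ultimately have "augmentation (0 - 1 :: falg) = 0"
    unfolding univ_cong_def by (rule augmentation_two_sided_ideal)
  then show False
    unfolding augmentation_diff by simp
qed

instance
proof
  fix a b c :: univ_bh
  show "a * b * c = a * (b * c)" by transfer (simp add: mult.assoc)
  show "1 * a = a" by transfer simp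
  show "a * 1 = a" by transfer simp
  show "(a + b) * c = a * c + b * c" by transfer (simp add: distrib_right)
  show "a * (b + c) = a * b + a * c" by transfer (simp add: distrib_left)
  show "a + b + c = a + (b + c)" by transfer (simp add: add.assoc)
  show "a + b = b + a" by transfer (simp add: add.commute)
  show "0 + a = a" by transfer simp
  show "- a + a = 0" by transfer simp
  show "a - b = a + - b" by transfer simp
  show "(0::univ_bh) \<noteq> 1" by transfer (rule not_univ_cong_zero_one)
qed

end

lift_definition bh_class :: "falg \<Rightarrow> univ_bh" is "\<lambda>x. x" .

lemma bh_class_add: "bh_class (x + y) = bh_class x + bh_class y"
  by transfer simp

lemma bh_class_diff: "bh_class (x - y) = bh_class x - bh_class y"
  by transfer simp

lemma bh_class_uminus: "bh_class (- x) = - bh_class x"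
  by transfer simp

lemma bh_class_mult: "bh_class (x * y) = bh_class x * bh_class y"
  by transfer simp

lemma bh_class_one: "bh_class 1 = 1"
  by transfer simp

lemma bh_class_zero: "bh_class 0 = 0"
  by transfer simp

lemma bh_class_eq_iff: "bh_class x = bh_class y \<longleftrightarrow> x - y \<in> two_sided_ideal univ_relations"
  by transfer (simp add: univ_cong_def)

lemma bh_class_cases: obtains x where "h = bh_class x"
  by transfer (use univ_cong_refl in blast)

lemma bh_class_relation: "x - y \<in> univ_relations \<Longrightarrow> bh_class x = bh_class y"
  by (simp add: bh_class_eq_iff two_sided_ideal_generator)

lemma bh_class_letter_inverse: "bh_class (mono [x]) * bh_class (mono [inv_letter x]) = 1"
proof -
  have "bh_class (mono [x, inv_letter x]) = bh_class 1"
    by (rule bh_class_relation) (unfold univ_relations_def, blast)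
  then show ?thesis
    by (simp add: mono_Cons[of x "[inv_letter x]"] bh_class_mult bh_class_one)
qed

lemma commute_if_commute_with_words:
  assumes "\<And>w. c * bh_class (mono w) = bh_class (mono w) * c"
  shows "c * y = y * c"
proof -
  obtain z where y: "y = bh_class z"
    by (rule bh_class_cases)
  obtain zc where c: "c = bh_class zc"
    by (rule bh_class_cases)
  have "c * bh_class z = bh_class z * c"
  proof (induction z rule: poly_mapping_single_induct)
    case (single k d)
    obtain w where k: "k = FW w"
      by (cases k)
    have single_eq: "Poly_Mapping.single k d = Poly_Mapping.single 0 d * mono w"
      by (simp add: k mono_def mult_single)
    have "c * bh_class (Poly_Mapping.single 0 d) = bh_class (Poly_Mapping.single 0 d) * c"
      by (simp add: c bh_class_mult[symmetric] single_zero_mult_commute)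
    then show ?case
      by (simp add: single_eq bh_class_mult assms mult.assoc flip: mult.assoc[of c])
  qed (simp_all add: bh_class_zero bh_class_add distrib_left distrib_right)
  then show ?thesis
    by (simp add: y)
qed

lemma bh_class_word_trace_central: "bh_class (word_trace h) * y = y * bh_class (word_trace h)"
proof (rule commute_if_commute_with_words)
  fix g
  have "bh_class (mono g * word_trace h) = bh_class (word_trace h * mono g)"
    by (rule bh_class_relation) (unfold univ_relations_def, blast)
  then show
    "bh_class (word_trace h) * bh_class (mono g) = bh_class (mono g) * bh_class (word_trace h)"
    by (simp add: bh_class_mult)
qed

definition elt_a :: univ_bh where "elt_a = bh_class (mono [gen_a])"
definition elt_a_inv :: univ_bh where "elt_a_inv = bh_class (mono [inv_letter gen_a])"
definition elt_b :: univ_bh where "elt_b = bh_class (mono [gen_b])"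
definition elt_b_inv :: univ_bh where "elt_b_inv = bh_class (mono [inv_letter gen_b])"

definition tr_a :: univ_bh where "tr_a = elt_a + elt_a_inv"
definition tr_ab :: univ_bh where "tr_ab = elt_a * elt_b + elt_b_inv * elt_a_inv"

lemma elt_a_inv_mult: "elt_a_inv * elt_a = 1"
  using bh_class_letter_inverse[of "inv_letter gen_a"] by (simp add: elt_a_def elt_a_inv_def)

lemma elt_b_inv_mult: "elt_b_inv * elt_b = 1"
  using bh_class_letter_inverse[of "inv_letter gen_b"] by (simp add: elt_b_def elt_b_inv_def)

lemma tr_a_eq_class: "tr_a = bh_class (word_trace [gen_a])"
  by (simp add: tr_a_def elt_a_def elt_a_inv_def inv_word_def bh_class_add)

lemma tr_ab_eq_class: "tr_ab = bh_class (word_trace [gen_a, gen_b])"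
  by (simp add: tr_ab_def elt_a_def elt_a_inv_def elt_b_def elt_b_inv_def inv_word_def
      bh_class_add bh_class_mult mono_Cons[of gen_a "[gen_b]"]
      mono_Cons[of "inv_letter gen_b" "[inv_letter gen_a]"])

lemma tr_a_eq_b: "tr_a = elt_b + elt_b_inv"
proof -
  have "bh_class (word_trace [gen_a]) = bh_class (word_trace [gen_b])"
    by (rule bh_class_relation) (simp add: univ_relations_def)
  then show ?thesis
    by (simp add: tr_a_eq_class elt_b_def elt_b_inv_def inv_word_def bh_class_add)
qed

lemma tr_a_central: "tr_a * y = y * tr_a"
  by (simp add: tr_a_eq_class bh_class_word_trace_central)

lemma tr_ab_central: "tr_ab * y = y * tr_ab"
  by (simp add: tr_ab_eq_class bh_class_word_trace_central)

lemma elt_a_square: "elt_a * elt_a = tr_a * elt_a - 1"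
  by (simp add: tr_a_def distrib_right elt_a_inv_mult)

lemma elt_b_square: "elt_b * elt_b = tr_a * elt_b - 1"
  by (simp add: tr_a_eq_b distrib_right elt_b_inv_mult)

lemma elt_b_mult_a:
  "elt_b * elt_a = tr_ab - tr_a * tr_a + tr_a * elt_a + tr_a * elt_b - elt_a * elt_b"
proof -
  have a_inv: "elt_a_inv = tr_a - elt_a"
    by (simp add: tr_a_def)
  have b_inv: "elt_b_inv = tr_a - elt_b"
    by (simp add: tr_a_eq_b)
  have "tr_ab = elt_a * elt_b + (tr_a - elt_b) * (tr_a - elt_a)"
    by (simp add: tr_ab_def a_inv b_inv)
  also have "\<dots> = elt_a * elt_b + tr_a * tr_a - tr_a * elt_a - tr_a * elt_b + elt_b * elt_a"
    by (simp add: algebra_simps tr_a_central[of elt_b])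
  finally show ?thesis
    by (simp add: algebra_simps)
qed

lemma elt_b_mult_ab: "elt_b * (elt_a * elt_b) = tr_ab * elt_b - tr_a + elt_a"
proof -
  have "elt_b * (elt_a * elt_b)
      = (tr_ab - tr_a * tr_a + tr_a * elt_a + tr_a * elt_b - elt_a * elt_b) * elt_b"
    by (simp add: elt_b_mult_a flip: mult.assoc)
  also have "\<dots> = tr_ab * elt_b - tr_a * tr_a * elt_b + tr_a * elt_a * elt_b
      + tr_a * (elt_b * elt_b) - elt_a * (elt_b * elt_b)"
    by (simp add: algebra_simps)
  also have "\<dots> = tr_ab * elt_b - tr_a + elt_a"
    by (simp add: elt_b_square algebra_simps tr_a_central[of elt_a])
  finally show ?thesis .
qed

section \<open>Central coefficients and the evaluation map\<close>

definition bh_coeffs :: "univ_bh set" where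
  "bh_coeffs = {c. \<forall>y. c * y = y * c} \<inter> bh_class ` subalg Hplus_X_gens"

lemma bh_coeffsI:
  assumes "\<And>y. c * y = y * c" and "c \<in> bh_class ` subalg Hplus_X_gens"
  shows "c \<in> bh_coeffs"
  using assms by (simp add: bh_coeffs_def)

lemma bh_coeffs_commute: "c \<in> bh_coeffs \<Longrightarrow> c * y = y * c"
  by (simp add: bh_coeffs_def)

lemma bh_coeffs_subalg: "c \<in> bh_coeffs \<Longrightarrow> c \<in> bh_class ` subalg Hplus_X_gens"
  by (simp add: bh_coeffs_def)

lemma bh_coeffs_scalar: "bh_class (Poly_Mapping.single 0 c) \<in> bh_coeffs"
proof (rule bh_coeffsI)
  show "bh_class (Poly_Mapping.single 0 c) * y = y * bh_class (Poly_Mapping.single 0 c)" for y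
    by (rule commute_if_commute_with_words)
      (simp flip: bh_class_mult add: single_zero_mult_commute)
qed (intro imageI subalg.scalar)

lemma bh_coeffs_add: "a \<in> bh_coeffs \<Longrightarrow> b \<in> bh_coeffs \<Longrightarrow> a + b \<in> bh_coeffs"
proof (intro bh_coeffsI)
  assume a: "a \<in> bh_coeffs" and b: "b \<in> bh_coeffs"
  show "(a + b) * y = y * (a + b)" for y
    using bh_coeffs_commute[OF a] bh_coeffs_commute[OF b] by (simp add: distrib_left distrib_right)
  show "a + b \<in> bh_class ` subalg Hplus_X_gens"
    using bh_coeffs_subalg[OF a] bh_coeffs_subalg[OF b]
    by (auto simp flip: bh_class_add intro!: imageI subalg.add)
qed

lemma bh_coeffs_mult: "a \<in> bh_coeffs \<Longrightarrow> b \<in> bh_coeffs \<Longrightarrow> a * b \<in> bh_coeffs"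
proof (intro bh_coeffsI)
  assume a: "a \<in> bh_coeffs" and b: "b \<in> bh_coeffs"
  show "a * b * y = y * (a * b)" for y
    using bh_coeffs_commute[OF a] bh_coeffs_commute[OF b] by (metis mult.assoc)
  show "a * b \<in> bh_class ` subalg Hplus_X_gens"
    using bh_coeffs_subalg[OF a] bh_coeffs_subalg[OF b]
    by (auto simp flip: bh_class_mult intro!: imageI subalg.mult)
qed

lemma bh_coeffs_uminus: "a \<in> bh_coeffs \<Longrightarrow> - a \<in> bh_coeffs"
proof (intro bh_coeffsI)
  assume a: "a \<in> bh_coeffs"
  show "- a * y = y * - a" for y
    using bh_coeffs_commute[OF a] by simp
  show "- a \<in> bh_class ` subalg Hplus_X_gens"
    using bh_coeffs_subalg[OF a] by (auto simp flip: bh_class_uminus intro!: imageI subalg_uminus)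
qed

lemma bh_coeffs_zero: "0 \<in> bh_coeffs"
  using bh_coeffs_scalar[of 0] by (simp add: bh_class_zero)

lemma bh_coeffs_one: "1 \<in> bh_coeffs"
  using bh_coeffs_scalar[of 1] by (simp add: bh_class_one)

typedef bh_coeff = bh_coeffs
  using bh_coeffs_zero by blast

setup_lifting type_definition_bh_coeff

instantiation bh_coeff :: comm_ring_1
begin

lift_definition zero_bh_coeff :: bh_coeff is 0
  by (rule bh_coeffs_zero)

lift_definition one_bh_coeff :: bh_coeff is 1
  by (rule bh_coeffs_one)

lift_definition plus_bh_coeff :: "bh_coeff \<Rightarrow> bh_coeff \<Rightarrow> bh_coeff" is "(+)"
  by (rule bh_coeffs_add)

lift_definition times_bh_coeff :: "bh_coeff \<Rightarrow> bh_coeff \<Rightarrow> bh_coeff" is "(*)"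
  by (rule bh_coeffs_mult)

lift_definition uminus_bh_coeff :: "bh_coeff \<Rightarrow> bh_coeff" is uminus
  by (rule bh_coeffs_uminus)

lift_definition minus_bh_coeff :: "bh_coeff \<Rightarrow> bh_coeff \<Rightarrow> bh_coeff" is "(-)"
  by (simp only: diff_conv_add_uminus bh_coeffs_add bh_coeffs_uminus)

instance
proof
  fix a b c :: bh_coeff
  show "a * b * c = a * (b * c)" by transfer (simp add: mult.assoc)
  show "a * b = b * a" by transfer (simp add: bh_coeffs_commute)
  show "1 * a = a" by transfer simp
  show "(a + b) * c = a * c + b * c" by transfer (simp add: distrib_right)
  show "a + b + c = a + (b + c)" by transfer (simp add: add.assoc)
  show "a + b = b + a" by transfer (simp add: add.commute)
  show "0 + a = a" by transfer simp
  show "- a + a = 0" by transfer simp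
  show "a - b = a + - b" by transfer simp
  show "(0::bh_coeff) \<noteq> 1" by transfer simp
qed

end

lemma Rep_bh_coeff_add [simp]: "Rep_bh_coeff (a + b) = Rep_bh_coeff a + Rep_bh_coeff b"
  by transfer simp

lemma Rep_bh_coeff_diff [simp]: "Rep_bh_coeff (a - b) = Rep_bh_coeff a - Rep_bh_coeff b"
  by transfer simp

lemma Rep_bh_coeff_mult_fold:
  "Rep_bh_coeff a * Rep_bh_coeff b = Rep_bh_coeff (a * b)"
  "Rep_bh_coeff a * (Rep_bh_coeff b * y) = Rep_bh_coeff (a * b) * y"
  by (transfer, simp add: mult.assoc)+

lemma Rep_bh_coeff_uminus [simp]: "Rep_bh_coeff (- a) = - Rep_bh_coeff a"
  by transfer simp

lemma Rep_bh_coeff_zero [simp]: "Rep_bh_coeff 0 = 0"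
  by transfer simp

lemma Rep_bh_coeff_one [simp]: "Rep_bh_coeff 1 = 1"
  by transfer simp

lemma Rep_bh_coeff_commute: "Rep_bh_coeff c * y = y * Rep_bh_coeff c"
  using Rep_bh_coeff bh_coeffs_commute by blast

lemma Rep_bh_coeff_in_subalg:
  obtains z where "z \<in> subalg Hplus_X_gens" and "Rep_bh_coeff c = bh_class z"
  using Rep_bh_coeff[of c] bh_coeffs_subalg by blast

lemma bh_class_word_trace_in_bh_coeffs: "bh_class (word_trace h) \<in> bh_coeffs"
proof (rule bh_coeffsI)
  have "word_trace h \<in> subalg Hplus_X_gens"
    unfolding Hplus_X_gens_def by (blast intro: subalg.gen)
  then show "bh_class (word_trace h) \<in> bh_class ` subalg Hplus_X_gens"
    by (rule imageI)
qed (rule bh_class_word_trace_central)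

definition coeff_tr_a :: bh_coeff where "coeff_tr_a = Abs_bh_coeff tr_a"
definition coeff_tr_ab :: bh_coeff where "coeff_tr_ab = Abs_bh_coeff tr_ab"

lemma Rep_coeff_tr_a [simp]: "Rep_bh_coeff coeff_tr_a = tr_a"
  by (simp add: coeff_tr_a_def Abs_bh_coeff_inverse tr_a_eq_class bh_class_word_trace_in_bh_coeffs)

lemma Rep_coeff_tr_ab [simp]: "Rep_bh_coeff coeff_tr_ab = tr_ab"
  by (simp add: coeff_tr_ab_def Abs_bh_coeff_inverse tr_ab_eq_class
      bh_class_word_trace_in_bh_coeffs)

abbreviation coeff_mult :: "bh_coeff abvec \<Rightarrow> bh_coeff abvec \<Rightarrow> bh_coeff abvec" where
  "coeff_mult \<equiv> ab_mult coeff_tr_a coeff_tr_ab"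

abbreviation coeff_word :: "letter list \<Rightarrow> bh_coeff abvec" where
  "coeff_word \<equiv> ab_word coeff_tr_a coeff_tr_ab"

fun bh_eval :: "bh_coeff abvec \<Rightarrow> univ_bh" where
  "bh_eval (AB x0 x1 x2 x3) = Rep_bh_coeff x0 + Rep_bh_coeff x1 * elt_a + Rep_bh_coeff x2 * elt_b
     + Rep_bh_coeff x3 * (elt_a * elt_b)"

lemma bh_eval_add: "bh_eval (x + y) = bh_eval x + bh_eval y"
  by (cases x; cases y) (simp add: algebra_simps)

lemma bh_eval_diff: "bh_eval (x - y) = bh_eval x - bh_eval y"
  by (cases x; cases y) (simp add: algebra_simps)

lemma bh_eval_scale: "bh_eval (ab_scale c x) = Rep_bh_coeff c * bh_eval x"
  by (cases x) (simp add: Rep_bh_coeff_mult_fold algebra_simps)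

lemma bh_eval_one: "bh_eval ab_one = 1"
  by (simp add: ab_one_def)

lemma bh_eval_mult_a: "bh_eval (coeff_mult ab_a v) = elt_a * bh_eval v"
proof (cases v)
  case (AB y0 y1 y2 y3)
  have "elt_a * Rep_bh_coeff c = Rep_bh_coeff c * elt_a" for c
    by (simp add: Rep_bh_coeff_commute)
  then have "elt_a * bh_eval v = Rep_bh_coeff y0 * elt_a + Rep_bh_coeff y1 * (elt_a * elt_a)
      + Rep_bh_coeff y2 * (elt_a * elt_b) + Rep_bh_coeff y3 * ((elt_a * elt_a) * elt_b)"
    by (simp add: AB distrib_left flip: mult.assoc)
  also have "\<dots> = bh_eval (AB (- y1) (y0 + y1 * coeff_tr_a) (- y3) (y2 + y3 * coeff_tr_a))"
    by (simp add: elt_a_square Rep_bh_coeff_mult_fold algebra_simps flip: Rep_coeff_tr_a)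
  also have "AB (- y1) (y0 + y1 * coeff_tr_a) (- y3) (y2 + y3 * coeff_tr_a) = coeff_mult ab_a v"
    by (simp add: AB ab_a_def algebra_simps)
  finally show ?thesis ..
qed

lemma bh_eval_mult_b: "bh_eval (coeff_mult ab_b v) = elt_b * bh_eval v"
proof (cases v)
  case (AB y0 y1 y2 y3)
  have "elt_b * Rep_bh_coeff c = Rep_bh_coeff c * elt_b" for c
    by (simp add: Rep_bh_coeff_commute)
  then have "elt_b * bh_eval v = Rep_bh_coeff y0 * elt_b + Rep_bh_coeff y1 * (elt_b * elt_a)
      + Rep_bh_coeff y2 * (elt_b * elt_b) + Rep_bh_coeff y3 * (elt_b * (elt_a * elt_b))"
    by (simp add: AB distrib_left flip: mult.assoc)
  also have "\<dots> = bh_eval (AB (y1 * (coeff_tr_ab - coeff_tr_a * coeff_tr_a) - y2 - y3 * coeff_tr_a)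
      (y1 * coeff_tr_a + y3) (y0 + y1 * coeff_tr_a + y2 * coeff_tr_a + y3 * coeff_tr_ab) (- y1))"
    by (simp add: elt_b_mult_a elt_b_square elt_b_mult_ab Rep_bh_coeff_mult_fold algebra_simps
        flip: Rep_coeff_tr_a Rep_coeff_tr_ab)
  also have "AB (y1 * (coeff_tr_ab - coeff_tr_a * coeff_tr_a) - y2 - y3 * coeff_tr_a)
      (y1 * coeff_tr_a + y3) (y0 + y1 * coeff_tr_a + y2 * coeff_tr_a + y3 * coeff_tr_ab) (- y1)
      = coeff_mult ab_b v"
    by (simp add: AB ab_b_def algebra_simps)
  finally show ?thesis ..
qed

lemma bh_eval_mult_letter:
  "bh_eval (coeff_mult (ab_letter coeff_tr_a l) v) = bh_class (mono [l]) * bh_eval v"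
proof (cases l rule: ab_letter.cases)
  case 1
  then show ?thesis
    by (simp add: bh_eval_mult_a elt_a_def gen_a_def)
next
  case 2
  have "elt_a_inv = tr_a - elt_a"
    by (simp add: tr_a_def)
  then show ?thesis
    unfolding 2 ab_mult_letter_a_inv
    by (simp add: bh_eval_diff bh_eval_scale bh_eval_mult_a left_diff_distrib
        elt_a_inv_def gen_a_def inv_letter_def)
next
  case 3
  then show ?thesis
    by (simp add: bh_eval_mult_b elt_b_def gen_b_def)
next
  case 4
  have "elt_b_inv = tr_a - elt_b"
    by (simp add: tr_a_eq_b)
  then show ?thesis
    unfolding 4 ab_mult_letter_b_inv
    by (simp add: bh_eval_diff bh_eval_scale bh_eval_mult_b left_diff_distrib
        elt_b_inv_def gen_b_def inv_letter_def)
qed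

lemma bh_eval_word: "bh_eval (coeff_word w) = bh_class (mono w)"
proof (induction w)
  case (Cons l w)
  then show ?case
    by (simp add: bh_eval_mult_letter mono_Cons[of l w] bh_class_mult)
qed (simp add: bh_eval_one bh_class_one)

lemma bh_class_rev_word_mult_word:
  assumes "rev w = map swap_letter w"
  obtains c \<alpha> \<beta> where
    "bh_class (mono (rev w @ w))
       + Rep_bh_coeff c * (bh_class (mono (w @ [gen_a])) - bh_class (mono (gen_b # w)))
       = Rep_bh_coeff \<alpha> + Rep_bh_coeff \<beta> * elt_a"
proof -
  let ?v = "coeff_word w"
  have "ab_rev coeff_tr_a coeff_tr_ab ?v = ab_swap coeff_tr_a coeff_tr_ab ?v"
    by (metis assms ab_word_rev ab_word_map_swap)
  then obtain c \<alpha> \<beta> where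
    "coeff_mult (ab_rev coeff_tr_a coeff_tr_ab ?v) ?v
       + ab_scale c (coeff_mult ?v ab_a - coeff_mult ab_b ?v)
     = AB \<alpha> \<beta> 0 0"
    using ab_rev_mult_self_in_span_one_a by blast
  then have "bh_eval (coeff_word (rev w @ w)
       + ab_scale c (coeff_word (w @ [gen_a]) - coeff_word (gen_b # w)))
     = bh_eval (AB \<alpha> \<beta> 0 0)"
    by (simp add: ab_word_append ab_word_rev gen_a_def gen_b_def)
  then show ?thesis
    by (intro that) (simp only: bh_eval_add bh_eval_scale bh_eval_diff bh_eval_word bh_eval.simps
        Rep_bh_coeff_zero mult_zero_left add_0_right)
qed

lemma rev_word_mult_word_in_Hplus:
  assumes "rev w = map swap_letter w"
    and "two_sided_ideal univ_relations \<subseteq> two_sided_ideal S"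
    and "mono (w @ [gen_a]) - mono (gen_b # w) \<in> S"
  shows "\<exists>z \<in> subalg Hplus_X_gens. mono (rev w @ w) - z \<in> two_sided_ideal S"
proof -
  obtain c \<alpha> \<beta> where eq:
    "bh_class (mono (rev w @ w))
       + Rep_bh_coeff c * (bh_class (mono (w @ [gen_a])) - bh_class (mono (gen_b # w)))
       = Rep_bh_coeff \<alpha> + Rep_bh_coeff \<beta> * elt_a"
    using bh_class_rev_word_mult_word[OF assms(1)] .
  obtain zc z\<alpha> z\<beta> where z:
    "zc \<in> subalg Hplus_X_gens" "Rep_bh_coeff c = bh_class zc"
    "z\<alpha> \<in> subalg Hplus_X_gens" "Rep_bh_coeff \<alpha> = bh_class z\<alpha>"
    "z\<beta> \<in> subalg Hplus_X_gens" "Rep_bh_coeff \<beta> = bh_class z\<beta>"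
    by (metis Rep_bh_coeff_in_subalg)
  define z where "z = z\<alpha> + z\<beta> * mono [gen_a]"
  define knot_rel where "knot_rel = mono (w @ [gen_a]) - mono (gen_b # w)"
  have "bh_class (mono (rev w @ w) + zc * knot_rel) = bh_class z"
    using eq by (simp add: z z_def knot_rel_def elt_a_def bh_class_add bh_class_mult bh_class_diff)
  then have "mono (rev w @ w) + zc * knot_rel - z \<in> two_sided_ideal S"
    using assms(2) by (auto simp: bh_class_eq_iff)
  moreover have "zc * knot_rel \<in> two_sided_ideal S"
    using assms(3) by (simp add: knot_rel_def two_sided_ideal_mult_left two_sided_ideal_generator)
  ultimately have "(mono (rev w @ w) + zc * knot_rel - z) - zc * knot_rel \<in> two_sided_ideal S"
    by (rule two_sided_ideal_diff)
  then have "mono (rev w @ w) - z \<in> two_sided_ideal S"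
    by (simp add: algebra_simps)
  moreover have "mono [gen_a] \<in> subalg Hplus_X_gens"
    by (rule subalg.gen) (simp add: Hplus_X_gens_def)
  then have "z \<in> subalg Hplus_X_gens"
    unfolding z_def using z by (blast intro: subalg.add subalg.mult)
  ultimately show ?thesis
    by blast
qed

section \<open>Two-bridge knots\<close>

definition tb_letter :: "int \<Rightarrow> int \<Rightarrow> nat \<Rightarrow> letter" where
  "tb_letter p q i = (even i, odd ((int i * q) div p))"

lemma tb_word_eq_map: "tb_word p q = map (tb_letter p q) [1..<nat p]"
proof -
  have "letter_pow (even i) (tb_eps p q i) = [tb_letter p q i]" for i
    by (simp add: letter_pow_def tb_eps_def tb_letter_def)
  then show ?thesis
    by (simp add: tb_word_def)
qed

lemma tb_letter_complement:
  fixes p q :: int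
  assumes "p = int n" and "odd p" and "odd q" and "coprime p q" and "0 < i" and "i < n"
  shows "tb_letter p q (n - i) = swap_letter (tb_letter p q i)"
proof -
  have "\<not> p dvd int i * q"
  proof
    assume "p dvd int i * q"
    then have "p dvd int i"
      using \<open>coprime p q\<close> by (simp add: coprime_dvd_mult_left_iff)
    with assms(1,5,6) show False
      by (auto dest: zdvd_imp_le)
  qed
  then have minus_div: "(- (int i * q)) div p = - ((int i * q) div p) - 1"
    using assms(1,6) by (simp add: zdiv_zminus1_eq_if dvd_eq_mod_eq_0)
  have "int (n - i) * q = - (int i * q) + q * p"
    using assms(1,6) by (simp add: of_nat_diff algebra_simps)
  then have "(int (n - i) * q) div p = (- (int i * q) + q * p) div p"
    by (rule arg_cong)
  also have "\<dots> = q + (- (int i * q)) div p"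
    using assms(1,6) by (intro div_mult_self1) simp
  also have "\<dots> = q - (int i * q) div p - 1"
    by (simp add: minus_div)
  finally have "(int (n - i) * q) div p = q - (int i * q) div p - 1" .
  then show ?thesis
    using assms(1-3,6) by (simp add: tb_letter_def swap_letter_def)
qed

lemma rev_tb_word:
  fixes p q :: int
  assumes "0 < p" and "odd p" and "odd q" and "coprime p q"
  shows "rev (tb_word p q) = map swap_letter (tb_word p q)"
proof (rule nth_equalityI)
  define n where "n = nat p"
  have p: "p = int n"
    using assms(1) by (simp add: n_def)
  fix k
  assume "k < length (rev (tb_word p q))"
  then have k: "Suc k < n"
    by (simp add: tb_word_eq_map n_def)
  moreover have "Suc (n - Suc (Suc k)) = n - Suc k"
    using k by simp
  ultimately have "rev (tb_word p q) ! k = tb_letter p q (n - Suc k)"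
    by (simp add: tb_word_eq_map rev_nth n_def[symmetric])
  also have "\<dots> = swap_letter (tb_letter p q (Suc k))"
    using p assms(2-4) k by (intro tb_letter_complement) simp_all
  also have "\<dots> = map swap_letter (tb_word p q) ! k"
    using k by (simp add: tb_word_eq_map n_def[symmetric])
  finally show "rev (tb_word p q) ! k = map swap_letter (tb_word p q) ! k" .
qed simp

lemma univ_ideal_subset_BH_ideal:
  "two_sided_ideal univ_relations \<subseteq> two_sided_ideal (BH_relations p q)"
proof (rule two_sided_ideal_subset)
  have inv: "mono [l, inv_letter l] - 1 \<in> BH_relations p q" for l
    unfolding BH_relations_def by blast
  have central: "mono g * word_trace h - word_trace h * mono g \<in> BH_relations p q" for g h
    unfolding BH_relations_def by blast
  have conj:
    "mono (tb_word p q) * mono [gen_a] - mono [gen_b] * mono (tb_word p q) \<in> BH_relations p q"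
    by (simp add: BH_relations_def flip: mono_append)
  have "word_trace [gen_a] - word_trace [gen_b] \<in> two_sided_ideal (BH_relations p q)"
    using inv central conj by (rule conjugate_letters_trace_diff)
  moreover have "univ_relations \<subseteq> BH_relations p q \<union> {word_trace [gen_a] - word_trace [gen_b]}"
    by (auto simp: univ_relations_def BH_relations_def)
  ultimately show "univ_relations \<subseteq> two_sided_ideal (BH_relations p q)"
    using two_sided_ideal_generator by blast
qed

lemma mono_letter_pow_a_in_subalg: "mono (letter_pow False k) \<in> subalg Hplus_X_gens"
proof -
  have "mono [(False, b)] \<in> subalg Hplus_X_gens" for b
    by (rule subalg.gen) (cases b; simp add: Hplus_X_gens_def gen_a_def inv_letter_def)
  then show ?thesis
    by (simp add: letter_pow_def subalg_mono_replicate)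
qed

theorem mainTheorem9:
  fixes p q :: int
  assumes "p \<ge> 3" and "odd p" and "odd q" and "- p < q" and "q < p" and "coprime p q"
  shows "two_bridge_BH_condition p q"
proof -
  let ?J = "two_sided_ideal (BH_relations p q)" and ?w = "tb_word p q"
  have "rev ?w = map swap_letter ?w"
    using assms by (intro rev_tb_word) simp_all
  moreover have "mono (?w @ [gen_a]) - mono (gen_b # ?w) \<in> BH_relations p q"
    by (simp add: BH_relations_def)
  ultimately obtain z where z: "z \<in> subalg Hplus_X_gens" "mono (rev ?w @ ?w) - z \<in> ?J"
    using rev_word_mult_word_in_Hplus univ_ideal_subset_BH_ideal by blast
  define a_power where "a_power = letter_pow False (- 2 * tb_sigma p q)"
  have "mono (tb_longitude p q) - z * mono a_power = (mono (rev ?w @ ?w) - z) * mono a_power"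
    by (simp add: tb_longitude_def a_power_def mono_append algebra_simps)
  then have "mono (tb_longitude p q) - z * mono a_power \<in> ?J"
    using two_sided_ideal_mult_right[OF z(2)] by simp
  moreover have "z * mono a_power \<in> subalg Hplus_X_gens"
    using z(1) mono_letter_pow_a_in_subalg unfolding a_power_def by (rule subalg.mult)
  ultimately show ?thesis
    unfolding two_bridge_BH_condition_def by blast
qed

end
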